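(* Let $a_{n,k}=|\mathcal{S}_{n,k}^{1\prec n}(1324)|$. For $n\ge3$ and $2\le k\le n-1$, \[ a_{n,k}=\sum_{m=2}^{n-k+1} a_{m,1}\,a_{n-m+1,k-1}. \] Consequently, for every $k\ge1$, $T_{1,k}(x)=x f(x)^k$, and $g_1(x,t)=\dfrac{x t f(x)}{1-t f(x)}$ as formal power series.
   Context: $\mathcal{S}_n(1324)$ denotes the set of permutations of $\{1,\dots,n\}$ (in one-line notation) avoiding the pattern $1324$. For $a,k\ge1$, $\mathcal{S}_{n,k}^{a\prec n}(1324)$ is the set of $\sigma\in\mathcal{S}_n(1324)$ with $\sigma^{-1}(n)-\sigma^{-1}(a)=k$ and $\sigma^{-1}(b)>\sigma^{-1}(n)$ for all $b\in\{1,\dots,a-1\}$. Define $T_{a,k}(x)=\sum_{n\ge k+1}|\mathcal{S}_{n,k}^{a\prec n}(1324)|x^n$ and $g_a(x,t)=\sum_{k\ge1}t^kT_{a,k}(x)$. Let $f(x)=\sum_{n\ge2}a_{n,1}x^{n-1}=x+2x^2+6x^3+22x^4+\cdots$ (so that $T_{1,1}(x)=xf(x)$; its coefficients are the OEIS sequence A000139). *)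

theory Defs
  imports "HOL-Computational_Algebra.Formal_Power_Series"
begin

text \<open>A permutation of {1,...,n} in one-line notation is a list of length n; positions are 0-based
  (only differences of positions matter).\<close>
definition perms :: "nat \<Rightarrow> nat list set" where
  "perms n = {xs. distinct xs \<and> set xs = {1..n}}"

definition avoids1324 :: "nat list \<Rightarrow> bool" where
  "avoids1324 xs \<longleftrightarrow> \<not> (\<exists>i j k l. i < j \<and> j < k \<and> k < l \<and> l < length xs \<and>
      xs ! i < xs ! k \<and> xs ! k < xs ! j \<and> xs ! j < xs ! l)"

definition pos :: "nat list \<Rightarrow> nat \<Rightarrow> nat" where
  "pos xs v = (LEAST i. i < length xs \<and> xs ! i = v)"

definition Sprec :: "nat \<Rightarrow> nat \<Rightarrow> nat \<Rightarrow> nat list set" where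
  "Sprec a n k = {xs \<in> perms n. avoids1324 xs \<and>
      int (pos xs n) - int (pos xs a) = int k \<and>
      (\<forall>b \<in> {1..<a}. pos xs b > pos xs n)}"

definition acnt :: "nat \<Rightarrow> nat \<Rightarrow> nat" where
  "acnt n k = card (Sprec 1 n k)"

definition fser :: "real fps" where
  "fser = Abs_fps (\<lambda>m. if m \<ge> 1 then real (acnt (m + 1) 1) else 0)"

definition Tser :: "nat \<Rightarrow> nat \<Rightarrow> real fps" where
  "Tser a k = Abs_fps (\<lambda>n. if n \<ge> k + 1 then real (card (Sprec a n k)) else 0)"

definition gser :: "nat \<Rightarrow> real fps fps" where
  "gser a = Abs_fps (\<lambda>k. if k \<ge> 1 then Tser a k else 0)"

end

theory Submission
  imports Defs "HOL-Library.Sublist"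
begin

(*
  Let k \<ge> 2 and let \<sigma> avoid 1324 with n standing k places after 1. The entry m right
  after 1 splits \<sigma>: an entry y \<ge> m standing after an entry x < m before 1 would give the
  pattern x y m n, and an entry y \<ge> m after an entry 1 < x < m behind m would give 1 m x y.
  Hence \<sigma> = A' B 1 m C' D with A', C' above m and B, D below m. Then B 1 m D lies in
  S_{m,1}, and A' m C' shifted down by m - 1 lies in S_{n-m+1,k-1}; conversely every such pair
  glues back to an avoider, the two avoidance conditions covering the ways a 1324 pattern can
  meet the two halves. This bijection is the convolution a_{n,k} = sum_m a_{m,1} a_{n-m+1,k-1},
  i.e. T_{1,k} = f T_{1,k-1}, so T_{1,k} = x f^k and g_1 is a geometric series in t.
*)

section \<open>Pattern containment via subsequences\<close>

lemma subseq_nth_Cons: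
  assumes "i < length xs" "j \<le> i" "subseq ws (drop (Suc i) xs)"
  shows "subseq (xs ! i # ws) (drop j xs)"
proof -
  have "drop j xs = take (i - j) (drop j xs) @ xs ! i # drop (Suc i) xs"
    using assms(1,2) by (metis Cons_nth_drop_Suc append_take_drop_id drop_drop le_add_diff_inverse2)
  moreover have "subseq (xs ! i # ws) (xs ! i # drop (Suc i) xs)"
    using assms(3) by simp
  ultimately show ?thesis
    by (metis list_emb_append2)
qed

lemma subseq_4_conv_nth:
  "subseq [a, b, c, d] xs \<longleftrightarrow> (\<exists>i j k l. i < j \<and> j < k \<and> k < l \<and> l < length xs \<and>
     xs ! i = a \<and> xs ! j = b \<and> xs ! k = c \<and> xs ! l = d)"
proof
  assume "subseq [a, b, c, d] xs"
  then obtain u1 u2 u3 u4 r where xs: "xs = u1 @ a # u2 @ b # u3 @ c # u4 @ d # r"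
    by (auto dest!: list_emb_ConsD)
  define i where "i = length u1"
  define j where "j = i + 1 + length u2"
  define k where "k = j + 1 + length u3"
  define l where "l = k + 1 + length u4"
  have "xs ! i = a" "xs ! j = b" "xs ! k = c" "xs ! l = d" "l < length xs"
    using xs by (simp_all add: nth_append i_def j_def k_def l_def)
  moreover have "i < j" "j < k" "k < l"
    by (simp_all add: j_def k_def l_def)
  ultimately show "\<exists>i j k l. i < j \<and> j < k \<and> k < l \<and> l < length xs \<and>
     xs ! i = a \<and> xs ! j = b \<and> xs ! k = c \<and> xs ! l = d"
    by blast
next
  assume "\<exists>i j k l. i < j \<and> j < k \<and> k < l \<and> l < length xs \<and>
     xs ! i = a \<and> xs ! j = b \<and> xs ! k = c \<and> xs ! l = d"
  then obtain i j k l where o: "i < j" "j < k" "k < l" "l < length xs"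
    and abcd: "xs ! i = a" "xs ! j = b" "xs ! k = c" "xs ! l = d"
    by blast
  have "subseq [xs ! l] (drop (Suc k) xs)"
    by (rule subseq_nth_Cons) (use o in auto)
  then have "subseq [xs ! k, xs ! l] (drop (Suc j) xs)"
    by (rule subseq_nth_Cons[rotated 2]) (use o in auto)
  then have "subseq [xs ! j, xs ! k, xs ! l] (drop (Suc i) xs)"
    by (rule subseq_nth_Cons[rotated 2]) (use o in auto)
  then have "subseq [xs ! i, xs ! j, xs ! k, xs ! l] (drop 0 xs)"
    by (rule subseq_nth_Cons[rotated 2]) (use o in auto)
  then show "subseq [a, b, c, d] xs"
    using abcd by simp
qed

lemma avoids1324_iff_subseq:
  "avoids1324 xs \<longleftrightarrow> \<not> (\<exists>a b c d. subseq [a, b, c, d] xs \<and> a < c \<and> c < b \<and> b < d)"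
  unfolding avoids1324_def subseq_4_conv_nth by blast

lemma avoids1324_subseqD:
  "avoids1324 xs \<Longrightarrow> subseq [a, b, c, d] xs \<Longrightarrow> a < c \<Longrightarrow> c < b \<Longrightarrow> b < d \<Longrightarrow> False"
  unfolding avoids1324_iff_subseq by blast

lemma avoids1324_subseq: "subseq ys xs \<Longrightarrow> avoids1324 xs \<Longrightarrow> avoids1324 ys"
  unfolding avoids1324_iff_subseq using subseq_order.trans by blast

lemma avoids1324_map:
  assumes mono: "\<And>x y. x \<in> set xs \<Longrightarrow> y \<in> set xs \<Longrightarrow> x < y \<Longrightarrow> f x < f y"
    and av: "avoids1324 xs"
  shows "avoids1324 (map f xs)"
proof -
  have less: "x < y" if "x \<in> set xs" "y \<in> set xs" "f x < f y" for x y
    using that mono[of y x] by (cases x y rule: linorder_cases) auto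
  show ?thesis
    unfolding avoids1324_def
  proof (intro notI, elim exE conjE)
    fix i j k l
    assume ijkl: "i < j" "j < k" "k < l" "l < length (map f xs)"
      and "map f xs ! i < map f xs ! k" "map f xs ! k < map f xs ! j" "map f xs ! j < map f xs ! l"
    then have "xs ! i < xs ! k" "xs ! k < xs ! j" "xs ! j < xs ! l"
      by (auto intro!: less)
    then show False
      using av ijkl(1-3) ijkl(4)[unfolded length_map] unfolding avoids1324_def by blast
  qed
qed

lemma set_mono_subseq: "subseq xs ys \<Longrightarrow> set xs \<subseteq> set ys"
  by (induction rule: list_emb.induct) auto

lemma subseq_filterI: "subseq ws xs \<Longrightarrow> \<forall>w\<in>set ws. P w \<Longrightarrow> subseq ws (filter P xs)"
  using subseq_filter[of ws xs P] by simp

lemma subseq_append4E: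
  assumes "subseq ws (xs1 @ xs2 @ xs3 @ xs4)"
  obtains w1 w2 w3 w4 where "ws = w1 @ w2 @ w3 @ w4"
    and "subseq w1 xs1" "subseq w2 xs2" "subseq w3 xs3" "subseq w4 xs4"
proof -
  obtain w1 r1 where "ws = w1 @ r1" "subseq w1 xs1" "subseq r1 (xs2 @ xs3 @ xs4)"
    using assms by (rule subseq_appendE)
  moreover obtain w2 r2 where "r1 = w2 @ r2" "subseq w2 xs2" "subseq r2 (xs3 @ xs4)"
    using \<open>subseq r1 (xs2 @ xs3 @ xs4)\<close> by (rule subseq_appendE)
  moreover obtain w3 w4 where "r2 = w3 @ w4" "subseq w3 xs3" "subseq w4 xs4"
    using \<open>subseq r2 (xs3 @ xs4)\<close> by (rule subseq_appendE)
  ultimately show ?thesis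
    using that by blast
qed

context
  fixes m :: nat and X Y E D :: "nat list"
  assumes X: "\<forall>x\<in>set X. m \<le> x" and Y: "\<forall>y\<in>set Y. m < y"
    and E: "\<forall>x\<in>set E. x < m" and D: "\<forall>y\<in>set D. y < m"
    and av_low: "avoids1324 (E @ m # D)" and av_high: "avoids1324 (X @ m # Y)"
begin

lemma avoids1324_merge_straddling:
  assumes s: "subseq [a, b, c, d] (X @ E @ m # Y @ D)" and o: "a < c" "c < b" "b < d"
    and straddle: "a < m" "m \<le> d"
  shows False
proof -
  have "subseq [a, b, c, d] (X @ E @ (m # Y) @ D)"
    using s by simp
  then obtain w1 w2 w3 w4 where W: "[a, b, c, d] = w1 @ w2 @ w3 @ w4"
    and s1: "subseq w1 X" and s2: "subseq w2 E" and s3: "subseq w3 (m # Y)" and s4: "subseq w4 D"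
    by (rule subseq_append4E)
  \<comment> \<open>\<open>a\<close> is the least and \<open>d\<close> the greatest entry of the pattern\<close>
  have "w1 = []"
    using W straddle o X set_mono_subseq[OF s1] by (cases w1) auto
  moreover have "w4 = []"
    using W straddle o D set_mono_subseq[OF s4] by (cases w4 rule: rev_cases) auto
  ultimately have W': "[a, b, c, d] = w2 @ w3"
    using W by simp
  have small: "\<forall>x\<in>set w2. x < m"
    using E set_mono_subseq[OF s2] by auto
  have large: "\<forall>x\<in>set w3. m \<le> x"
    using Y set_mono_subseq[OF s3] by (auto intro: less_imp_le)
  consider "w2 = [a, b, c]" "w3 = [d]" | "w2 = [a]" "w3 = [b, c, d]"
    using W' small large straddle o by (auto simp: Cons_eq_append_conv)
  then show False
  proof cases
    case 1
    have "subseq ([a, b, c] @ [m]) (E @ m # D)"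
      using s2 1 by (intro list_emb_append_mono) auto
    moreover have "b < m"
      using small 1 by simp
    ultimately show False
      using avoids1324_subseqD[OF av_low _ o(1,2)] by simp
  next
    case 2
    then have "m < b" "m \<le> c"
      using large o by auto
    then have bcd: "subseq [b, c, d] Y"
      using s3 2 by simp
    have "subseq [m, b, c, d] (m # Y)"
      using bcd by simp
    then have "subseq [m, b, c, d] (X @ m # Y)"
      by (rule list_emb_append2)
    moreover have "m < c"
      using Y set_mono_subseq[OF bcd] by simp
    ultimately show False
      using avoids1324_subseqD[OF av_high] o(2,3) by blast
  qed
qed

lemma avoids1324_merge: "avoids1324 (X @ E @ m # Y @ D)"
  unfolding avoids1324_iff_subseq
proof clarify
  fix a b c d
  assume s: "subseq [a, b, c, d] (X @ E @ m # Y @ D)" and o: "a < c" "c < b" "b < d"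
  have high: "filter (\<lambda>y. m \<le> y) (X @ E @ m # Y @ D) = X @ m # Y"
    using X Y E D by (simp add: not_le less_imp_le)
  have low: "filter (\<lambda>y. y < m) (X @ E @ m # Y @ D) = E @ D"
    using X Y E D by (simp add: not_less less_imp_le)
  consider "m \<le> a" | "d < m" | "a < m" "m \<le> d" by linarith
  then show False
  proof cases
    case 1
    then have "subseq [a, b, c, d] (X @ m # Y)"
      using subseq_filterI[OF s, of "\<lambda>y. m \<le> y"] o high by simp
    then show False by (rule avoids1324_subseqD[OF av_high _ o])
  next
    case 2
    then have "subseq [a, b, c, d] (E @ D)"
      using subseq_filterI[OF s, of "\<lambda>y. y < m"] o low by simp
    then have "subseq [a, b, c, d] (E @ m # D)"
      by (rule subseq_order.trans) (simp add: subseq_append' list_emb_Cons)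
    then show False by (rule avoids1324_subseqD[OF av_low _ o])
  next
    case 3
    then show False by (rule avoids1324_merge_straddling[OF s o])
  qed
qed

end

lemma eq_filter_append_filter_not:
  assumes "\<And>x y. subseq [x, y] xs \<Longrightarrow> \<not> P x \<Longrightarrow> \<not> P y"
  shows "xs = filter P xs @ filter (\<lambda>x. \<not> P x) xs"
  using assms
proof (induction xs)
  case (Cons z xs)
  have IH: "xs = filter P xs @ filter (\<lambda>x. \<not> P x) xs"
    using Cons.prems by (intro Cons.IH) (meson list_emb_Cons)
  show ?case
  proof (cases "P z")
    case False
    have "\<not> P y" if "y \<in> set xs" for y
      using Cons.prems[of z y] False that by (simp add: subseq_singleton_left)
    then show ?thesis
      using False by simp
  qed (use IH in simp)
qed simp

section \<open>Positions and the sets \<open>Sprec 1 n k\<close>\<close>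

lemma perms_iff: "xs \<in> perms n \<longleftrightarrow> length xs = n \<and> set xs = {1..n}"
proof -
  have "distinct xs \<longleftrightarrow> length xs = n" if "set xs = {1..n}"
    using that distinct_card[of xs] card_distinct[of xs] by auto
  then show ?thesis
    unfolding perms_def by blast
qed

lemma pos_append_Cons: "v \<notin> set xs \<Longrightarrow> pos (xs @ v # ys) v = length xs"
  unfolding pos_def by (rule Least_equality) (auto, metis nth_append nth_mem not_le)

lemma pos_nth: "distinct xs \<Longrightarrow> i < length xs \<Longrightarrow> pos xs (xs ! i) = i"
  unfolding pos_def by (rule Least_equality) (auto simp: nth_eq_iff_index_eq)

lemma nth_pos: "v \<in> set xs \<Longrightarrow> pos xs v < length xs \<and> xs ! pos xs v = v"
  unfolding pos_def by (rule LeastI_ex) (simp add: in_set_conv_nth)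

lemma Sprec_1_splitE:
  assumes xs: "xs \<in> Sprec 1 n k" and k: "1 \<le> k"
  obtains A C where "xs = A @ 1 # C" and "1 \<notin> set A" and "k \<le> length C" and "C ! (k - 1) = n"
proof -
  have perm: "xs \<in> perms n" and diff: "int (pos xs n) - int (pos xs 1) = int k"
    using xs unfolding Sprec_def by auto
  have "n \<noteq> 0"
  proof
    \<comment> \<open>for \<open>n = 0\<close> both positions are the junk value \<open>LEAST i. False\<close>\<close>
    assume "n = 0"
    then have "xs = []" using perm by (simp add: perms_iff)
    then show False using diff k by (simp add: pos_def \<open>n = 0\<close>)
  qed
  then have "1 \<in> set xs" "n \<in> set xs"
    using perm by (auto simp: perms_iff)
  then obtain A C where A: "xs = A @ 1 # C" "1 \<notin> set A"
    by (meson split_list_first)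
  have "pos xs n = length A + k"
    using diff pos_append_Cons[OF A(2)] A(1) by simp
  then have "length A + k < length xs" "xs ! (length A + k) = n"
    using nth_pos[OF \<open>n \<in> set xs\<close>] by auto
  then have "k \<le> length C" "C ! (k - 1) = n"
    using A(1) k by (auto simp: nth_append)
  with A show ?thesis
    using that by blast
qed

lemma Sprec_1_I:
  assumes perm: "A @ 1 # C \<in> perms n" and av: "avoids1324 (A @ 1 # C)"
    and k: "1 \<le> k" "k \<le> length C" "C ! (k - 1) = n"
  shows "A @ 1 # C \<in> Sprec 1 n k"
proof -
  have dist: "distinct (A @ 1 # C)"
    using perm by (simp add: perms_def)
  then have "pos (A @ 1 # C) 1 = length A"
    by (simp add: pos_append_Cons)
  moreover have "(A @ 1 # C) ! (length A + k) = n"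
    using k by (simp add: nth_append)
  then have "pos (A @ 1 # C) n = length A + k"
    using pos_nth[OF dist, of "length A + k"] k by simp
  ultimately show ?thesis
    using perm av unfolding Sprec_def by simp
qed

lemma Sprec_1_iff:
  assumes "1 \<le> k"
  shows "xs \<in> Sprec 1 n k \<longleftrightarrow> xs \<in> perms n \<and> avoids1324 xs \<and>
    (\<exists>A C. xs = A @ 1 # C \<and> k \<le> length C \<and> C ! (k - 1) = n)"
proof
  assume xs: "xs \<in> Sprec 1 n k"
  obtain A C where "xs = A @ 1 # C" "k \<le> length C" "C ! (k - 1) = n"
    using Sprec_1_splitE[OF xs assms] by blast
  with xs show "xs \<in> perms n \<and> avoids1324 xs \<and> (\<exists>A C. xs = A @ 1 # C \<and> k \<le> length C \<and> C ! (k - 1) = n)"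
    unfolding Sprec_def by blast
qed (use assms Sprec_1_I in blast)

corollary Sprec_1_1_iff:
  "xs \<in> Sprec 1 m 1 \<longleftrightarrow> xs \<in> perms m \<and> avoids1324 xs \<and> (\<exists>B D. xs = B @ 1 # m # D)"
proof -
  have "1 \<le> length C \<and> C ! 0 = m \<longleftrightarrow> (\<exists>D. C = m # D)" for C :: "nat list"
    by (cases C) auto
  then show ?thesis
    unfolding Sprec_1_iff[OF order_refl] by auto
qed

section \<open>Gluing a permutation into another\<close>

text \<open>\<open>glue_blocks m A B C D\<close> glues \<open>B 1 m D\<close> into \<open>A 1 C\<close>: the latter is shifted up by
  \<open>m - 1\<close>, \<open>B 1\<close> is inserted in front of its entry \<open>m\<close> (the former \<open>1\<close>) and \<open>D\<close> is appended.\<close>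

definition glue_blocks :: "nat \<Rightarrow> nat list \<Rightarrow> nat list \<Rightarrow> nat list \<Rightarrow> nat list \<Rightarrow> nat list" where
  "glue_blocks m A B C D = map (\<lambda>x. x + (m - 1)) A @ B @ 1 # m # map (\<lambda>x. x + (m - 1)) C @ D"

definition unglue :: "nat \<Rightarrow> nat list \<Rightarrow> nat \<times> nat list \<times> nat list" where
  "unglue n \<sigma> = (let m = \<sigma> ! Suc (pos \<sigma> 1) in
     (m, map (\<lambda>y. if y = n then m else y) (filter (\<lambda>y. y < m \<or> y = n) \<sigma>),
      map (\<lambda>y. y - (m - 1)) (filter (\<lambda>y. m \<le> y) \<sigma>)))"

lemma filter_eq_singleton: "distinct xs \<Longrightarrow> v \<in> set xs \<Longrightarrow> filter (\<lambda>y. y = v) xs = [v]"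
  by (induction xs) (auto simp: filter_empty_conv)

context
  fixes m n k :: nat and A B C D :: "nat list"
  assumes low: "B @ 1 # m # D \<in> Sprec 1 m 1"
    and high: "A @ 1 # C \<in> Sprec 1 n k"
    and k_pos: "1 \<le> k"
begin

lemma glue_low_values: "x \<in> set B \<Longrightarrow> 1 < x \<and> x < m" "x \<in> set D \<Longrightarrow> 1 < x \<and> x < m"
proof -
  have "set B \<union> set D \<subseteq> {1..m} - {1, m}"
    using low unfolding Sprec_def perms_def by auto
  then show "x \<in> set B \<Longrightarrow> 1 < x \<and> x < m" "x \<in> set D \<Longrightarrow> 1 < x \<and> x < m"
    by auto
qed

lemma glue_high_values: "x \<in> set A \<Longrightarrow> 1 < x \<and> x \<le> n" "x \<in> set C \<Longrightarrow> 1 < x \<and> x \<le> n"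
proof -
  have "set A \<union> set C \<subseteq> {1..n} - {1}"
    using high unfolding Sprec_def perms_def by auto
  then show "x \<in> set A \<Longrightarrow> 1 < x \<and> x \<le> n" "x \<in> set C \<Longrightarrow> 1 < x \<and> x \<le> n"
    by auto
qed

lemma glue_two_le: "2 \<le> m"
  using low by (auto simp: Sprec_def perms_def)

lemma glue_high_nth: "k \<le> length C \<and> C ! (k - 1) = n"
proof -
  obtain A' C' where eq: "A @ 1 # C = A' @ 1 # C'" and C': "k \<le> length C' \<and> C' ! (k - 1) = n"
    using high unfolding Sprec_1_iff[OF k_pos] by blast
  have "distinct (A @ 1 # C)" "distinct (A' @ 1 # C')"
    using high unfolding eq by (auto simp: Sprec_def perms_def)
  then have "C = C'"
    using eq append_Cons_eq_iff[of 1 A C A' C'] by auto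
  then show ?thesis
    using C' by simp
qed

lemma glue_high_mem: "n \<in> set C"
proof -
  have "k - 1 < length C"
    using glue_high_nth k_pos by linarith
  then show ?thesis
    using glue_high_nth nth_mem by metis
qed

lemma glue_length_bound: "Suc k \<le> n"
  using glue_high_nth high by (auto simp: Sprec_def perms_iff)

lemma set_glue_blocks: "set (glue_blocks m A B C D) = {1..n + m - 1}"
proof -
  define s where "s x = x + (m - 1)" for x
  have m: "2 \<le> m" by (rule glue_two_le)
  have "set (glue_blocks m A B C D) = s ` set (A @ 1 # C) \<union> set (B @ 1 # m # D)"
    using m unfolding glue_blocks_def by (auto simp: s_def)
  also have "\<dots> = s ` {1..n} \<union> {1..m}"
    using low high by (simp add: Sprec_def perms_def)
  also have "s ` {1..n} = {m..n + m - 1}"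
    using m unfolding s_def image_add_atLeastAtMost' by simp
  also have "{m..n + m - 1} \<union> {1..m} = {1..n + m - 1}"
    using m glue_length_bound by auto
  finally show ?thesis .
qed

lemma avoids1324_glue_blocks: "avoids1324 (glue_blocks m A B C D)"
proof -
  define s where "s x = x + (m - 1)" for x
  have m: "2 \<le> m" by (rule glue_two_le)
  have "avoids1324 (map s A @ (B @ [1]) @ m # map s C @ D)"
  proof (rule avoids1324_merge)
    have "m < s x" if "x \<in> set A \<union> set C" for x
      using that m unfolding s_def by (auto dest: glue_high_values)
    then show "\<forall>x\<in>set (map s A). m \<le> x" "\<forall>y\<in>set (map s C). m < y"
      by fastforce+
    show "\<forall>x\<in>set (B @ [1]). x < m" "\<forall>y\<in>set D. y < m"
      using m by (auto dest: glue_low_values)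
  next
    show "avoids1324 ((B @ [1]) @ m # D)"
      using low by (simp add: Sprec_def)
    have "avoids1324 (map s (A @ 1 # C))"
      using high by (intro avoids1324_map) (auto simp: s_def Sprec_def)
    then show "avoids1324 (map s A @ m # map s C)"
      using m by (simp add: s_def)
  qed
  then show ?thesis
    unfolding glue_blocks_def s_def by simp
qed

lemma glue_blocks_mem: "glue_blocks m A B C D \<in> Sprec 1 (n + m - 1) (Suc k)"
proof -
  define s where "s x = x + (m - 1)" for x
  have m: "2 \<le> m" by (rule glue_two_le)
  have eq: "glue_blocks m A B C D = (map s A @ B) @ 1 # (m # map s C @ D)"
    unfolding glue_blocks_def s_def by simp
  have "length (B @ 1 # m # D) = m" "length (A @ 1 # C) = n"
    using low high by (simp_all add: Sprec_def perms_iff)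
  then have "glue_blocks m A B C D \<in> perms (n + m - 1)"
    using set_glue_blocks unfolding perms_iff eq by simp
  moreover have "(m # map s C @ D) ! (Suc k - 1) = n + m - 1"
    using glue_high_nth k_pos m by (auto simp: nth_Cons' nth_append s_def)
  moreover have "Suc k \<le> length (m # map s C @ D)"
    using glue_high_nth by simp
  ultimately show ?thesis
    unfolding eq using avoids1324_glue_blocks[unfolded eq] by (intro Sprec_1_I) simp_all
qed

lemma glue_shift_values:
  "y \<in> set A \<Longrightarrow> m < y + (m - 1) \<and> y + (m - 1) < n + m - 1"
  "y \<in> set C \<Longrightarrow> m < y + (m - 1) \<and> y + (m - 1) \<le> n + m - 1"
proof -
  have "n \<notin> set A"
    using high glue_high_mem by (auto simp: Sprec_def perms_def)
  then show "m < y + (m - 1) \<and> y + (m - 1) < n + m - 1" if "y \<in> set A"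
    using glue_high_values(1)[OF that] glue_two_le that by (cases "y = n") auto
  show "m < y + (m - 1) \<and> y + (m - 1) \<le> n + m - 1" if "y \<in> set C"
    using glue_high_values(2)[OF that] glue_two_le by auto
qed

lemma glue_blocks_after_1: "glue_blocks m A B C D ! Suc (pos (glue_blocks m A B C D) 1) = m"
proof -
  have "1 \<notin> set (map (\<lambda>x. x + (m - 1)) A @ B)"
    using glue_shift_values(1) glue_low_values(1) glue_two_le by fastforce
  then have "pos (glue_blocks m A B C D) 1 = length (map (\<lambda>x. x + (m - 1)) A @ B)"
    unfolding glue_blocks_def by (metis append.assoc pos_append_Cons)
  then show ?thesis
    unfolding glue_blocks_def by (simp add: nth_append)
qed

lemma filter_low_glue_blocks:
  "filter (\<lambda>y. y < m \<or> y = n + m - 1) (glue_blocks m A B C D) = B @ 1 # (n + m - 1) # D"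
proof -
  define s where "s x = x + (m - 1)" for x
  define N where "N = n + m - 1"
  have m: "2 \<le> m" "m < N"
    using glue_two_le glue_length_bound k_pos unfolding N_def by linarith+
  have "filter (\<lambda>y. y < m \<or> y = N) (map s C) = filter (\<lambda>y. y = N) (map s C)"
    by (intro filter_cong) (auto simp: s_def N_def dest: glue_shift_values(2))
  also have "\<dots> = [N]"
    using high glue_high_mem m
    by (intro filter_eq_singleton) (auto simp: Sprec_def perms_def distinct_map s_def N_def inj_on_def)
  moreover have "filter (\<lambda>y. y < m \<or> y = N) (map s A) = []"
    using glue_shift_values(1) by (fastforce simp: filter_empty_conv s_def N_def)
  moreover have "filter (\<lambda>y. y < m \<or> y = N) B = B" "filter (\<lambda>y. y < m \<or> y = N) D = D"
    using glue_low_values by (fastforce intro!: filter_True)+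
  ultimately show ?thesis
    unfolding glue_blocks_def s_def[symmetric] N_def[symmetric] using m by simp
qed

lemma filter_high_glue_blocks:
  "filter (\<lambda>y. m \<le> y) (glue_blocks m A B C D) = map (\<lambda>x. x + (m - 1)) (A @ 1 # C)"
proof -
  have "filter (\<lambda>y. m \<le> y) (map (\<lambda>x. x + (m - 1)) A) = map (\<lambda>x. x + (m - 1)) A"
    "filter (\<lambda>y. m \<le> y) (map (\<lambda>x. x + (m - 1)) C) = map (\<lambda>x. x + (m - 1)) C"
    using glue_shift_values by (fastforce intro!: filter_True)+
  moreover have "filter (\<lambda>y. m \<le> y) B = []" "filter (\<lambda>y. m \<le> y) D = []"
    using glue_low_values by (fastforce simp: filter_empty_conv)+
  ultimately show ?thesis
    unfolding glue_blocks_def using glue_two_le by simp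
qed

lemma unglue_glue_blocks: "unglue (n + m - 1) (glue_blocks m A B C D) = (m, B @ 1 # m # D, A @ 1 # C)"
proof -
  have "map (\<lambda>y. if y = n + m - 1 then m else y) (B @ 1 # (n + m - 1) # D) = B @ 1 # m # D"
    using glue_low_values glue_two_le glue_length_bound k_pos by (fastforce intro!: map_idI)
  moreover have "map (\<lambda>y. y - (m - 1)) (map (\<lambda>x. x + (m - 1)) (A @ 1 # C)) = A @ 1 # C"
    by (simp add: comp_def)
  ultimately show ?thesis
    unfolding unglue_def glue_blocks_after_1 filter_low_glue_blocks filter_high_glue_blocks Let_def
    by simp
qed

end

section \<open>Splitting a permutation at the entry after 1\<close>

lemma avoids1324_prefix_split:
  assumes perm: "P @ 1 # c # R \<in> perms n" and av: "avoids1324 (P @ 1 # c # R)" and n_in: "n \<in> set R"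
  shows "P = filter (\<lambda>y. c \<le> y) P @ filter (\<lambda>y. y < c) P"
proof -
  have "\<not> c \<le> y" if xy: "subseq [x, y] P" and x: "\<not> c \<le> x" for x y
  proof
    assume y: "c \<le> y"
    have "y \<in> set P"
      using set_mono_subseq[OF xy] by simp
    then have "y \<noteq> c" "y \<noteq> n" "y \<le> n"
      using perm n_in by (auto simp: perms_def)
    then have "c < y" "y < n"
      using y by auto
    have "subseq [c, n] (1 # c # R)"
      using n_in by (simp add: subseq_singleton_left)
    then have "subseq ([x, y] @ [c, n]) (P @ 1 # c # R)"
      using xy by (rule list_emb_append_mono[rotated])
    moreover have "x < c"
      using x by simp
    ultimately show False
      using avoids1324_subseqD[OF av _ _ \<open>c < y\<close> \<open>y < n\<close>] by (metis append_Cons append_Nil)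
  qed
  then have "P = filter (\<lambda>y. c \<le> y) P @ filter (\<lambda>y. \<not> c \<le> y) P"
    by (rule eq_filter_append_filter_not)
  then show ?thesis
    unfolding not_le .
qed

lemma avoids1324_suffix_split:
  assumes perm: "P @ 1 # c # R \<in> perms n" and av: "avoids1324 (P @ 1 # c # R)"
  shows "R = filter (\<lambda>y. c \<le> y) R @ filter (\<lambda>y. y < c) R"
proof -
  have "\<not> c \<le> y" if xy: "subseq [x, y] R" and x: "\<not> c \<le> x" for x y
  proof
    assume y: "c \<le> y"
    have "x \<in> set R" "y \<in> set R"
      using set_mono_subseq[OF xy] by auto
    then have "x \<noteq> 1" "x \<in> {1..n}" "y \<noteq> c"
      using perm unfolding perms_def by auto
    then have "1 < x" "c < y"
      using y by auto
    have "subseq [1, c] (P @ [1, c])"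
      by (rule list_emb_append2) simp
    then have "subseq ([1, c] @ [x, y]) ((P @ [1, c]) @ R)"
      using xy by (rule list_emb_append_mono)
    moreover have "x < c"
      using x by simp
    ultimately show False
      using avoids1324_subseqD[OF av _ \<open>1 < x\<close> _ \<open>c < y\<close>] by simp
  qed
  then have "R = filter (\<lambda>y. c \<le> y) R @ filter (\<lambda>y. \<not> c \<le> y) R"
    by (rule eq_filter_append_filter_not)
  then show ?thesis
    unfolding not_le .
qed

lemma Sprec_1_pivotE:
  assumes \<sigma>: "\<sigma> \<in> Sprec 1 n k" and k: "2 \<le> k"
  obtains P c R where "\<sigma> = P @ 1 # c # R" and "k - 2 < length R" and "R ! (k - 2) = n"
proof -
  have "1 \<le> k"
    using k by simp
  then obtain P Q where "\<sigma> = P @ 1 # Q" "k \<le> length Q" "Q ! (k - 1) = n"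
    using Sprec_1_splitE[OF \<sigma>] by blast
  then show ?thesis
    using that k by (cases Q) (auto simp: nth_Cons' numeral_2_eq_2)
qed

lemma nth_append_notin_right:
  "(xs @ ys) ! i = v \<Longrightarrow> i < length (xs @ ys) \<Longrightarrow> v \<notin> set ys \<Longrightarrow> i < length xs \<and> xs ! i = v"
  by (cases "i < length xs") (auto simp: nth_append)

lemma Sprec_blocks:
  assumes \<sigma>: "\<sigma> \<in> Sprec 1 n k" and k: "2 \<le> k"
  obtains c A B C D where "\<sigma> = A @ B @ 1 # c # C @ D"
    and "\<forall>y\<in>set A \<union> set C. c < y" and "\<forall>y\<in>set B \<union> set D. y < c"
    and "k - 1 \<le> length C" and "C ! (k - 2) = n"
proof -
  obtain P c R where \<sigma>_eq: "\<sigma> = P @ 1 # c # R" and R: "k - 2 < length R" "R ! (k - 2) = n"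
    by (rule Sprec_1_pivotE[OF \<sigma> k])
  have perm: "P @ 1 # c # R \<in> perms n" and av: "avoids1324 (P @ 1 # c # R)"
    using \<sigma> \<sigma>_eq by (simp_all add: Sprec_def)
  have n_in: "n \<in> set R"
    using R nth_mem by metis
  define A B C D where "A = filter (\<lambda>y. c \<le> y) P" and "B = filter (\<lambda>y. y < c) P"
    and "C = filter (\<lambda>y. c \<le> y) R" and "D = filter (\<lambda>y. y < c) R"
  have R_eq: "R = C @ D"
    unfolding C_def D_def by (rule avoids1324_suffix_split[OF perm av])
  have "P = A @ B"
    unfolding A_def B_def by (rule avoids1324_prefix_split[OF perm av n_in])
  then have blocks: "\<sigma> = A @ B @ 1 # c # C @ D"
    using \<sigma>_eq R_eq by simp
  have dist: "distinct (P @ 1 # c # R)" and vals: "set (P @ 1 # c # R) = {1..n}"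
    using perm by (simp_all add: perms_def)
  have "c \<noteq> n" "c \<le> n"
    using dist vals n_in by auto
  then have "c < n"
    by simp
  have "c \<notin> set A \<union> set C"
    using dist by (auto simp: A_def C_def)
  then have high: "\<forall>y\<in>set A \<union> set C. c < y"
    unfolding A_def C_def by (auto simp: order.order_iff_strict)
  have low: "\<forall>y\<in>set B \<union> set D. y < c"
    unfolding B_def D_def by auto
  have "n \<notin> set D"
    using bspec[OF low, of n] \<open>c < n\<close> by auto
  then have "k - 2 < length C" "C ! (k - 2) = n"
    using nth_append_notin_right[of C D "k - 2" n] R unfolding R_eq by auto
  moreover have "k - 1 \<le> length C"
    using \<open>k - 2 < length C\<close> k by linarith
  ultimately show ?thesis
    using that blocks high low by blast
qed

lemma image_minus_nat_atLeastAtMost: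
  fixes d :: nat
  assumes "d \<le> a" and "d \<le> b"
  shows "(\<lambda>x. x - d) ` {a..b} = {a - d..b - d}"
proof (rule subset_antisym)
  show "(\<lambda>x. x - d) ` {a..b} \<subseteq> {a - d..b - d}"
    by auto
  show "{a - d..b - d} \<subseteq> (\<lambda>x. x - d) ` {a..b}"
  proof
    fix y assume "y \<in> {a - d..b - d}"
    then have "y = (y + d) - d" "y + d \<in> {a..b}"
      using assms by auto
    then show "y \<in> (\<lambda>x. x - d) ` {a..b}"
      by (rule image_eqI)
  qed
qed

context
  fixes n c :: nat and A B C D :: "nat list"
  assumes perm: "A @ B @ 1 # c # C @ D \<in> perms n"
    and av: "avoids1324 (A @ B @ 1 # c # C @ D)"
    and high: "\<forall>y\<in>set A \<union> set C. c < y"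
    and low: "\<forall>y\<in>set B \<union> set D. y < c"
    and n_in: "n \<in> set C"
begin

lemma blocks_two_le: "2 \<le> c"
  using perm by (auto simp: perms_def)

lemma blocks_less: "c < n"
  using high n_in by auto

lemma blocks_low_less: "y \<in> set (B @ 1 # D) \<Longrightarrow> y < c"
  using low blocks_two_le by (cases "y = 1") auto

lemma blocks_high_ge: "y \<in> set (A @ c # C) \<Longrightarrow> c \<le> y"
  using high by (cases "y = c") (auto intro: less_imp_le)

lemma set_blocks_low: "set (B @ 1 # c # D) = {1..c}"
proof (rule subset_antisym)
  have vals: "set (A @ B @ 1 # c # C @ D) = {1..n}"
    using perm by (simp add: perms_def)
  show "set (B @ 1 # c # D) \<subseteq> {1..c}"
    using vals blocks_low_less by fastforce
  show "{1..c} \<subseteq> set (B @ 1 # c # D)"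
  proof
    fix y assume y: "y \<in> {1..c}"
    then have "y \<notin> set A \<union> set C"
      using high by (meson atLeastAtMost_iff leD)
    moreover have "y \<in> set (A @ B @ 1 # c # C @ D)"
      using vals y blocks_less by simp
    ultimately show "y \<in> set (B @ 1 # c # D)"
      by auto
  qed
qed

lemma set_blocks_high: "set (A @ c # C) = {c..n}"
proof (rule subset_antisym)
  have vals: "set (A @ B @ 1 # c # C @ D) = {1..n}"
    using perm by (simp add: perms_def)
  show "set (A @ c # C) \<subseteq> {c..n}"
    using vals blocks_high_ge by fastforce
  show "{c..n} \<subseteq> set (A @ c # C)"
  proof
    fix y assume y: "y \<in> {c..n}"
    then have "y \<notin> set (B @ 1 # D)"
      using blocks_low_less by (meson atLeastAtMost_iff leD)
    moreover have "y \<in> set (A @ B @ 1 # c # C @ D)"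
      using vals y blocks_two_le by simp
    ultimately show "y \<in> set (A @ c # C)"
      by auto
  qed
qed

text \<open>The low block is order-isomorphic to the subsequence \<open>B 1 n D\<close> of the permutation.\<close>

lemma avoids1324_blocks_low: "avoids1324 (B @ 1 # c # D)"
proof -
  define g where "g y = (if y = n then c else y)" for y
  have "avoids1324 (map g (B @ 1 # n # D))"
  proof (rule avoids1324_map)
    have "subseq (B @ [1] @ [n] @ D) ((A @ B) @ [1] @ (c # C) @ D)"
      using n_in by (intro list_emb_append_mono) (auto simp: subseq_singleton_left)
    then show "avoids1324 (B @ 1 # n # D)"
      using av avoids1324_subseq by auto
  next
    fix x y assume x: "x \<in> set (B @ 1 # n # D)" and y: "y \<in> set (B @ 1 # n # D)" and "x < y"
    have "x \<noteq> n"
      using y \<open>x < y\<close> blocks_low_less[of y] blocks_less by (cases "y = n") auto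
    then have "g x = x" "x < c"
      using x blocks_low_less[of x] by (auto simp: g_def)
    then show "g x < g y"
      using \<open>x < y\<close> by (simp add: g_def)
  qed
  moreover have "map g (B @ 1 # n # D) = B @ 1 # c # D"
  proof -
    have "n \<notin> set (B @ 1 # D)"
      using blocks_low_less[of n] blocks_less by auto
    then show ?thesis
      by (auto simp: g_def intro!: map_idI)
  qed
  ultimately show ?thesis
    by simp
qed

lemma avoids1324_blocks_high: "avoids1324 (A @ c # C)"
proof -
  have "subseq (c # C) ((B @ [1]) @ c # C @ D)"
    by (rule list_emb_append2) (simp add: list_emb_prefix)
  then have "subseq (A @ c # C) (A @ (B @ [1]) @ c # C @ D)"
    by (rule list_emb_append_mono[OF subseq_order.refl])
  then show ?thesis
    by (rule avoids1324_subseq) (use av in simp)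
qed

lemma blocks_low_mem: "B @ 1 # c # D \<in> Sprec 1 c 1"
proof -
  have "distinct (B @ 1 # c # D)"
    using perm by (auto simp: perms_def)
  then have "B @ 1 # c # D \<in> perms c"
    using set_blocks_low by (simp add: perms_def)
  then show ?thesis
    unfolding Sprec_1_1_iff using avoids1324_blocks_low by blast
qed

lemma blocks_high_mem:
  assumes j: "1 \<le> j" "j \<le> length C" "C ! (j - 1) = n"
  shows "map (\<lambda>y. y - (c - 1)) A @ 1 # map (\<lambda>y. y - (c - 1)) C \<in> Sprec 1 (n - c + 1) j"
proof -
  define h where "h = (\<lambda>y. y - (c - 1))"
  have c: "2 \<le> c" "c < n"
    by (rule blocks_two_le, rule blocks_less)
  have "distinct (A @ c # C)"
    using perm by (auto simp: perms_def)
  moreover have "inj_on h {c..n}"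
    using c by (auto simp: inj_on_def h_def)
  moreover have "h ` {c..n} = {1..n - c + 1}"
    using c unfolding h_def by (subst image_minus_nat_atLeastAtMost) auto
  ultimately have "map h (A @ c # C) \<in> perms (n - c + 1)"
    unfolding perms_def mem_Collect_eq distinct_map set_map set_blocks_high by blast
  moreover have "avoids1324 (map h (A @ c # C))"
  proof (rule avoids1324_map[OF _ avoids1324_blocks_high])
    fix x y assume x: "x \<in> set (A @ c # C)" and "x < y"
    have "c \<le> x"
      by (rule blocks_high_ge[OF x])
    then show "h x < h y"
      using \<open>x < y\<close> c unfolding h_def by linarith
  qed
  moreover have "map h (A @ c # C) = map h A @ 1 # map h C"
    using c by (simp add: h_def)
  moreover have "j \<le> length (map h C)" "map h C ! (j - 1) = n - c + 1"
    using j c by (simp_all add: h_def)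
  ultimately show ?thesis
    unfolding h_def[symmetric] using Sprec_1_I j(1) by simp
qed

lemma blocks_eq_glue_blocks:
  "A @ B @ 1 # c # C @ D = glue_blocks c (map (\<lambda>y. y - (c - 1)) A) B (map (\<lambda>y. y - (c - 1)) C) D"
proof -
  have "map (\<lambda>x. x + (c - 1)) (map (\<lambda>y. y - (c - 1)) X) = X" if "\<forall>y\<in>set X. c < y" for X
    using that by (induction X) auto
  then show ?thesis
    using high by (simp add: glue_blocks_def)
qed

end

section \<open>The bijection\<close>

definition glue :: "nat \<times> nat list \<times> nat list \<Rightarrow> nat list" where
  "glue = (\<lambda>(m, \<alpha>, \<beta>). glue_blocks m (takeWhile (\<lambda>x. x \<noteq> 1) \<beta>) (takeWhile (\<lambda>x. x \<noteq> 1) \<alpha>)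
     (tl (dropWhile (\<lambda>x. x \<noteq> 1) \<beta>)) (drop 2 (dropWhile (\<lambda>x. x \<noteq> 1) \<alpha>)))"

lemma takeWhile_dropWhile_append_Cons:
  "v \<notin> set xs \<Longrightarrow> takeWhile (\<lambda>x. x \<noteq> v) (xs @ v # ys) = xs \<and> dropWhile (\<lambda>x. x \<noteq> v) (xs @ v # ys) = v # ys"
  by (induction xs) auto

lemma glue_eq_glue_blocks:
  "1 \<notin> set A \<Longrightarrow> 1 \<notin> set B \<Longrightarrow> glue (m, B @ 1 # m # D, A @ 1 # C) = glue_blocks m A B C D"
  unfolding glue_def by (simp add: takeWhile_dropWhile_append_Cons)

lemma Sprec_decomposition:
  assumes \<sigma>: "\<sigma> \<in> Sprec 1 n k" and k: "2 \<le> k"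
  obtains m A B C D where "\<sigma> = glue_blocks m A B C D" and "n = (n - m + 1) + m - 1"
    and "B @ 1 # m # D \<in> Sprec 1 m 1" and "A @ 1 # C \<in> Sprec 1 (n - m + 1) (k - 1)"
proof -
  obtain c A B C D where \<sigma>_eq: "\<sigma> = A @ B @ 1 # c # C @ D"
    and high: "\<forall>y\<in>set A \<union> set C. c < y" and low: "\<forall>y\<in>set B \<union> set D. y < c"
    and C: "k - 1 \<le> length C" "C ! (k - 2) = n"
    by (rule Sprec_blocks[OF \<sigma> k])
  have perm: "A @ B @ 1 # c # C @ D \<in> perms n" and av: "avoids1324 (A @ B @ 1 # c # C @ D)"
    using \<sigma> \<sigma>_eq by (simp_all add: Sprec_def)
  have "k - 2 < length C"
    using C k by linarith
  then have n_in: "n \<in> set C"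
    using C(2) nth_mem by metis
  note blocks = perm av high low n_in
  have C': "1 \<le> k - 1" "k - 1 \<le> length C" "C ! (k - 1 - 1) = n"
    using C k by (simp_all add: numeral_2_eq_2)
  show ?thesis
  proof (rule that)
    show "\<sigma> = glue_blocks c (map (\<lambda>y. y - (c - 1)) A) B (map (\<lambda>y. y - (c - 1)) C) D"
      unfolding \<sigma>_eq by (rule blocks_eq_glue_blocks[OF blocks])
    show "n = (n - c + 1) + c - 1"
      using blocks_less[OF blocks] by simp
    show "B @ 1 # c # D \<in> Sprec 1 c 1"
      by (rule blocks_low_mem[OF blocks])
    show "map (\<lambda>y. y - (c - 1)) A @ 1 # map (\<lambda>y. y - (c - 1)) C \<in> Sprec 1 (n - c + 1) (k - 1)"
      by (rule blocks_high_mem[OF blocks C'])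
  qed
qed

definition glue_domain :: "nat \<Rightarrow> nat \<Rightarrow> (nat \<times> nat list \<times> nat list) set" where
  "glue_domain n k = (SIGMA m:{2..n - k + 1}. Sprec 1 m 1 \<times> Sprec 1 (n - m + 1) (k - 1))"

context
  fixes n k :: nat
  assumes k: "2 \<le> k"
begin

lemma unglue_mem_and_glue_unglue:
  assumes \<sigma>: "\<sigma> \<in> Sprec 1 n k"
  shows "unglue n \<sigma> \<in> glue_domain n k \<and> glue (unglue n \<sigma>) = \<sigma>"
proof -
  obtain m A B C D where \<sigma>_eq: "\<sigma> = glue_blocks m A B C D" and n: "n = (n - m + 1) + m - 1"
    and low: "B @ 1 # m # D \<in> Sprec 1 m 1" and high: "A @ 1 # C \<in> Sprec 1 (n - m + 1) (k - 1)"
    using Sprec_decomposition[OF \<sigma> k] by blast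
  have k1: "1 \<le> k - 1"
    using k by simp
  have unglue: "unglue n \<sigma> = (m, B @ 1 # m # D, A @ 1 # C)"
    using unglue_glue_blocks[OF low high k1] n \<sigma>_eq by simp
  have "2 \<le> m" "Suc (k - 1) \<le> n - m + 1"
    using glue_two_le[OF low high k1] glue_length_bound[OF low high k1] by simp_all
  then have "m \<in> {2..n - k + 1}"
    using k by auto
  then have "unglue n \<sigma> \<in> glue_domain n k"
    unfolding unglue glue_domain_def using low high by simp
  moreover have "1 \<notin> set A" "1 \<notin> set B"
    using low high by (auto simp: Sprec_def perms_def)
  then have "glue (m, B @ 1 # m # D, A @ 1 # C) = \<sigma>"
    unfolding \<sigma>_eq by (rule glue_eq_glue_blocks)
  ultimately show ?thesis
    unfolding unglue by blast
qed

lemma glue_mem_and_unglue_glue: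
  assumes x: "x \<in> glue_domain n k"
  shows "glue x \<in> Sprec 1 n k \<and> unglue n (glue x) = x"
proof -
  obtain m \<alpha> \<beta> where x_eq: "x = (m, \<alpha>, \<beta>)" and m: "2 \<le> m" "m \<le> n - k + 1"
    and \<alpha>: "\<alpha> \<in> Sprec 1 m 1" and \<beta>: "\<beta> \<in> Sprec 1 (n - m + 1) (k - 1)"
    using x by (auto simp: glue_domain_def)
  have k1: "1 \<le> k - 1"
    using k by simp
  obtain B D where \<alpha>_eq: "\<alpha> = B @ 1 # m # D"
    using \<alpha> Sprec_1_1_iff by blast
  moreover have "distinct \<alpha>"
    using \<alpha> by (simp add: Sprec_def perms_def)
  ultimately have "1 \<notin> set B"
    by simp
  obtain A C where \<beta>_eq: "\<beta> = A @ 1 # C" and "1 \<notin> set A"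
    using Sprec_1_splitE[OF \<beta> k1] by blast
  have glue: "glue x = glue_blocks m A B C D"
    unfolding x_eq \<alpha>_eq \<beta>_eq using \<open>1 \<notin> set A\<close> \<open>1 \<notin> set B\<close> by (rule glue_eq_glue_blocks)
  have n: "(n - m + 1) + m - 1 = n" "Suc (k - 1) = k"
    using m k by simp_all
  have "glue_blocks m A B C D \<in> Sprec 1 n k"
    using glue_blocks_mem[OF \<alpha>[unfolded \<alpha>_eq] \<beta>[unfolded \<beta>_eq] k1] unfolding n .
  moreover have "unglue n (glue_blocks m A B C D) = x"
    using unglue_glue_blocks[OF \<alpha>[unfolded \<alpha>_eq] \<beta>[unfolded \<beta>_eq] k1]
    unfolding n x_eq \<alpha>_eq \<beta>_eq .
  ultimately show ?thesis
    unfolding glue by blast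
qed

lemma bij_betw_unglue: "bij_betw (unglue n) (Sprec 1 n k) (glue_domain n k)"
proof (rule bij_betw_byWitness[where f' = glue])
  show "\<forall>\<sigma>\<in>Sprec 1 n k. glue (unglue n \<sigma>) = \<sigma>" "unglue n ` Sprec 1 n k \<subseteq> glue_domain n k"
    using unglue_mem_and_glue_unglue by blast+
  show "\<forall>x\<in>glue_domain n k. unglue n (glue x) = x" "glue ` glue_domain n k \<subseteq> Sprec 1 n k"
    using glue_mem_and_unglue_glue by blast+
qed

end

section \<open>Generating functions\<close>

lemma finite_Sprec: "finite (Sprec a n k)"
proof (rule finite_subset)
  show "Sprec a n k \<subseteq> {xs. set xs \<subseteq> {1..n} \<and> length xs = n}"
    by (auto simp: Sprec_def perms_iff)
  show "finite {xs. set xs \<subseteq> {1..n} \<and> length xs = n}"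
    by (rule finite_lists_length_eq) simp
qed

lemma acnt_rec:
  assumes "2 \<le> k"
  shows "acnt n k = (\<Sum>m = 2..n - k + 1. acnt m 1 * acnt (n - m + 1) (k - 1))"
proof -
  have "acnt n k = card (glue_domain n k)"
    unfolding acnt_def by (rule bij_betw_same_card[OF bij_betw_unglue[OF assms]])
  also have "\<dots> = (\<Sum>m = 2..n - k + 1. card (Sprec 1 m 1 \<times> Sprec 1 (n - m + 1) (k - 1)))"
    unfolding glue_domain_def by (rule card_SigmaI) (auto simp: finite_Sprec)
  finally show ?thesis
    by (simp add: acnt_def card_cartesian_product)
qed

lemma Tser_1_nth: "fps_nth (Tser 1 k) n = (if k + 1 \<le> n then real (acnt n k) else 0)"
  by (simp add: Tser_def acnt_def)

\<comment> \<open>the form in which \<open>Tser 1\<close> appears after \<open>auto\<close> has rewritten \<open>1\<close> to \<open>Suc 0\<close>\<close>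
lemmas Tser_Suc_0_nth = Tser_1_nth[unfolded One_nat_def]

lemma fser_nth: "fps_nth fser m = (if 1 \<le> m then real (acnt (m + 1) 1) else 0)"
  by (simp add: fser_def)

lemma Tser_1_Suc:
  assumes k: "1 \<le> k"
  shows "Tser 1 (Suc k) = fser * Tser 1 k"
proof (rule fps_ext)
  fix n
  have "fps_nth (fser * Tser 1 k) n = (\<Sum>i = 0..n. fps_nth fser i * fps_nth (Tser 1 k) (n - i))"
    by (rule fps_mult_nth)
  also have "\<dots> = (\<Sum>i \<in> {1..n - k - 1}. real (acnt (i + 1) 1 * acnt (n - i) k))"
    by (rule sum.mono_neutral_cong_right) (auto simp: fser_nth Tser_Suc_0_nth)
  finally have convolution:
    "fps_nth (fser * Tser 1 k) n = (\<Sum>i = 1..n - k - 1. real (acnt (i + 1) 1 * acnt (n - i) k))" .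
  show "fps_nth (Tser 1 (Suc k)) n = fps_nth (fser * Tser 1 k) n"
  proof (cases "k + 2 \<le> n")
    case True
    have "acnt n (Suc k) = (\<Sum>m = Suc 1..Suc (n - k - 1). acnt m 1 * acnt (n - m + 1) k)"
      using acnt_rec[of "Suc k" n] k True by (simp add: Suc_diff_Suc numeral_2_eq_2)
    also have "\<dots> = (\<Sum>i = 1..n - k - 1. acnt (i + 1) 1 * acnt (n - i) k)"
      unfolding sum.shift_bounds_cl_Suc_ivl using True by (intro sum.cong) (auto simp: Suc_diff_Suc)
    finally show ?thesis
      unfolding convolution Tser_1_nth using True by (simp only: of_nat_sum of_nat_mult) simp
  next
    case False
    then show ?thesis
      unfolding convolution Tser_1_nth by simp
  qed
qed

lemma Tser_1_eq: "1 \<le> k \<Longrightarrow> Tser 1 k = fps_X * fser ^ k"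
proof (induction k rule: dec_induct)
  case base
  show ?case
    by (rule fps_ext) (auto simp: Tser_Suc_0_nth fser_nth)
next
  case (step k)
  have "Tser 1 (Suc k) = fser * Tser 1 k"
    using step.hyps(1) by (rule Tser_1_Suc)
  then show ?case
    using step.IH by (simp add: mult.left_commute)
qed

lemma fps_mult_inverse_eq_1:
  fixes f :: "'a::{ring_1, inverse} fps"
  assumes "fps_nth f 0 * inverse (fps_nth f 0) = 1"
  shows "f * inverse f = 1"
  using fps_right_inverse[OF assms] by (simp add: fps_inverse_def)

lemma gser_1_nth: "fps_nth (gser 1) k = (if 1 \<le> k then fps_X * fser ^ k else 0)"
  using Tser_1_eq by (simp add: gser_def)

lemma gser_1_eq:
  "gser 1 = fps_const (fps_X * fser) * fps_X * inverse (1 - fps_X * fps_const fser)"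
proof -
  define g where "g = gser 1"
  define Q :: "real fps fps" where "Q = 1 - fps_X * fps_const fser"
  have g_nth: "fps_nth g k = (if 1 \<le> k then fps_X * fser ^ k else 0)" for k
    unfolding g_def by (rule gser_1_nth)
  have "g * Q = fps_const (fps_X * fser) * fps_X"
  proof (rule fps_ext)
    fix k
    have "fps_nth (g * Q) k = fps_nth g k - (if k = 0 then 0 else fps_nth g (k - 1) * fser)"
      unfolding Q_def by (simp add: algebra_simps)
    also have "\<dots> = fps_nth (fps_const (fps_X * fser) * fps_X) k"
    proof -
      consider "k = 0" | "k = 1" | j where "k = Suc (Suc j)"
        by (metis One_nat_def not0_implies_Suc)
      then show ?thesis
        by cases (simp_all add: g_nth mult.assoc mult.commute)
    qed
    finally show "fps_nth (g * Q) k = fps_nth (fps_const (fps_X * fser) * fps_X) k" .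
  qed
  moreover have "Q * inverse Q = 1"
    by (rule fps_mult_inverse_eq_1) (simp add: Q_def)
  ultimately show ?thesis
    unfolding g_def Q_def[symmetric] by (metis mult.assoc mult.right_neutral)
qed

theorem theorem2p6:
  shows "(\<forall>n k. 3 \<le> n \<and> 2 \<le> k \<and> k \<le> n - 1 \<longrightarrow>
            acnt n k = (\<Sum>m = 2..n - k + 1. acnt m 1 * acnt (n - m + 1) (k - 1)))
       \<and> (\<forall>k \<ge> 1. Tser 1 k = fps_X * fser ^ k)
       \<and> gser 1 = fps_const (fps_X * fser) * fps_X * inverse (1 - fps_X * fps_const fser)"
  using acnt_rec Tser_1_eq gser_1_eq by blast

end
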